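(* There exist a point $x\in\{0,1\}^{\mathbb{N}}$ such that, for the full shift $(\{0,1\}^{\mathbb{N}},S)$, $V^{\log}(x)\subsetneq V(x)$.
   Context: $S$ is the left shift. For $N\ge1$ let $\mathrm{Emp}(x,N)=\frac1N\sum_{n=1}^N\delta_{S^{n-1}(x)}$, and for $N\ge2$ let $\mathrm{Emp}^{\log}(x,N)=\frac1{\log N}\sum_{n=1}^N\frac1n\delta_{S^{n-1}(x)}$. $V(x)$ (resp. $V^{\log}(x)$) is the set of Borel probability measures $\nu$ such that $\mathrm{Emp}(x,N_k)\to\nu$ (resp. $\mathrm{Emp}^{\log}(x,N_k)\to\nu$) weak-$*$ for some increasing sequence $(N_k)$. *)

theory Defs
  imports "HOL-Probability.Probability"
begin

text \<open>The full shift on {0,1}^N, modelled as nat => bool with the product topology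
  (Function_Topology) and its Borel sigma-algebra.\<close>

type_synonym cantor = "nat \<Rightarrow> bool"

definition shift :: "cantor \<Rightarrow> cantor" where
  "shift x = (\<lambda>n. x (Suc n))"

definition Emp :: "cantor \<Rightarrow> nat \<Rightarrow> cantor measure" where
  "Emp x N = measure_of UNIV (sets (borel :: cantor measure))
     (\<lambda>A. ennreal ((1 / real N) * (\<Sum>n=1..N. indicator A ((shift ^^ (n - 1)) x))))"

text \<open>Emp_log(x,N) = (1/log N) sum_{n=1}^N (1/n) delta_{S^(n-1) x}  (meaningful for N >= 2)\<close>
definition Emp_log :: "cantor \<Rightarrow> nat \<Rightarrow> cantor measure" where
  "Emp_log x N = measure_of UNIV (sets (borel :: cantor measure))
     (\<lambda>A. ennreal ((1 / ln (real N)) * (\<Sum>n=1..N. (1 / real n) * indicator A ((shift ^^ (n - 1)) x))))"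

definition weak_star_conv :: "(nat \<Rightarrow> cantor measure) \<Rightarrow> cantor measure \<Rightarrow> bool" where
  "weak_star_conv \<mu> \<nu> \<longleftrightarrow>
     (\<forall>f :: cantor \<Rightarrow> real. continuous_on UNIV f \<and> bounded (range f) \<longrightarrow>
        (\<lambda>k. integral\<^sup>L (\<mu> k) f) \<longlonglongrightarrow> integral\<^sup>L \<nu> f)"

definition borel_prob :: "cantor measure \<Rightarrow> bool" where
  "borel_prob \<nu> \<longleftrightarrow> prob_space \<nu> \<and> sets \<nu> = sets (borel :: cantor measure)"

definition V :: "cantor \<Rightarrow> cantor measure set" where
  "V x = {\<nu>. borel_prob \<nu> \<and> (\<exists>Nk :: nat \<Rightarrow> nat. strict_mono Nk \<and>
              weak_star_conv (\<lambda>k. Emp x (Nk k)) \<nu>)}"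

definition V_log :: "cantor \<Rightarrow> cantor measure set" where
  "V_log x = {\<nu>. borel_prob \<nu> \<and> (\<exists>Nk :: nat \<Rightarrow> nat. strict_mono Nk \<and>
              weak_star_conv (\<lambda>k. Emp_log x (Nk k)) \<nu>)}"

end

theory Submission
  imports Defs "HOL-Real_Asymp.Real_Asymp"
begin

text \<open>Take for x the sequence whose ones fill exactly the blocks [2^(k^2), 2 * 2^(k^2)).
  At the time N = 2^((k+1)^2) all earlier blocks have density O(2^(-2k)), so Emp(x,N) is close to
  the Dirac measure at the zero sequence; at N = 2 * 2^((k+1)^2) half of the orbit has just been
  spent in a block of ones, so Emp(x,N) is close to the average of the Dirac measures at the zero
  and at the one sequence. For logarithmic averages a block only carries weight about ln 2, and
  fewer than sqrt(log N) blocks start below N, so their share O(sqrt(log N) / log N) vanishes: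
  every measure in V_log(x) integrates continuous functions like the Dirac measure at zero.
  As Emp(x, 2^((k+1)^2)) converges to that measure, V_log(x) is contained in V(x), while the
  average of the two Dirac measures lies in V(x) but not in V_log(x).\<close>

lemma integral_measure_of_weighted_points:
  fixes w :: "nat \<Rightarrow> real" and g :: "nat \<Rightarrow> cantor" and f :: "cantor \<Rightarrow> real"
  assumes I: "finite I" and w: "\<And>n. n \<in> I \<Longrightarrow> 0 \<le> w n" and f: "continuous_on UNIV f"
  shows "integral\<^sup>L (measure_of UNIV (sets borel) (\<lambda>B. ennreal (\<Sum>n\<in>I. w n * indicator B (g n)))) f
          = (\<Sum>n\<in>I. w n * f (g n))"
proof -
  let ?P = "point_measure I (\<lambda>n. ennreal (w n))"
  have space: "space ?P = I" by (simp add: space_point_measure)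
  have distr: "measure_of UNIV (sets borel) (\<lambda>B. ennreal (\<Sum>n\<in>I. w n * indicator B (g n)))
      = distr ?P borel g"
    unfolding distr_def space space_borel
  proof (intro arg_cong[where f="measure_of UNIV (sets borel)"] ext)
    fix B
    have "emeasure ?P (g -` B \<inter> I) = (\<Sum>n\<in>g -` B \<inter> I. ennreal (w n))"
      using I by (intro emeasure_point_measure_finite) auto
    also have "\<dots> = ennreal (\<Sum>n\<in>g -` B \<inter> I. w n)" using w by (intro sum_ennreal) auto
    also have "(\<Sum>n\<in>g -` B \<inter> I. w n) = (\<Sum>n\<in>I. w n * indicator B (g n))"
      using I by (simp add: Int_commute sum.inter_restrict[symmetric] indicator_def vimage_def)
    finally show "ennreal (\<Sum>n\<in>I. w n * indicator B (g n)) = emeasure ?P (g -` B \<inter> I)" by simp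
  qed
  have "integral\<^sup>L (distr ?P borel g) f = integral\<^sup>L ?P (\<lambda>n. f (g n))"
    by (intro integral_distr borel_measurable_continuous_onI f) simp
  also have "\<dots> = integral\<^sup>L (count_space I) (\<lambda>n. w n *\<^sub>R f (g n))"
    unfolding point_measure_def by (intro integral_density) (auto simp: AE_count_space w)
  also have "\<dots> = (\<Sum>n\<in>I. w n * f (g n))"
    using I by (simp add: lebesgue_integral_count_space_finite)
  finally show ?thesis using distr by simp
qed

lemma integral_Emp:
  assumes f: "continuous_on UNIV f"
  shows "integral\<^sup>L (Emp x N) f = (\<Sum>j<N. 1 / real N * f ((shift ^^ j) x))"
proof -
  have "Emp x N = measure_of UNIV (sets borel)
      (\<lambda>B. ennreal (\<Sum>n\<in>{1..N}. 1 / real N * indicator B ((shift ^^ (n - 1)) x)))"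
    unfolding Emp_def by (simp add: sum_distrib_left)
  then have "integral\<^sup>L (Emp x N) f = (\<Sum>n\<in>{1..N}. 1 / real N * f ((shift ^^ (n - 1)) x))"
    using integral_measure_of_weighted_points[OF _ _ f, of "{1..N}" "\<lambda>_. 1 / real N"] by simp
  also have "\<dots> = (\<Sum>j<N. 1 / real N * f ((shift ^^ j) x))"
    by (simp add: sum.atLeast1_atMost_eq)
  finally show ?thesis .
qed

lemma integral_Emp_log:
  assumes f: "continuous_on UNIV f"
  shows "integral\<^sup>L (Emp_log x N) f = (\<Sum>j<N. 1 / (ln (real N) * real (Suc j)) * f ((shift ^^ j) x))"
proof -
  have "Emp_log x N = measure_of UNIV (sets borel)
      (\<lambda>B. ennreal (\<Sum>n\<in>{1..N}. 1 / (ln (real N) * real n) * indicator B ((shift ^^ (n - 1)) x)))"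
    unfolding Emp_log_def by (simp add: sum_distrib_left mult.assoc)
  then have "integral\<^sup>L (Emp_log x N) f
      = (\<Sum>n\<in>{1..N}. 1 / (ln (real N) * real n) * f ((shift ^^ (n - 1)) x))"
    using integral_measure_of_weighted_points[OF _ _ f, of "{1..N}" "\<lambda>n. 1 / (ln (real N) * real n)"]
    by simp
  also have "\<dots> = (\<Sum>j<N. 1 / (ln (real N) * real (Suc j)) * f ((shift ^^ j) x))"
    by (simp add: sum.atLeast1_atMost_eq)
  finally show ?thesis .
qed

lemma funpow_shift: "(shift ^^ j) x = (\<lambda>i. x (i + j))"
  by (induction j arbitrary: x) (auto simp: shift_def funpow_Suc_right)

lemma continuous_on_cylinder_close:
  fixes f :: "cantor \<Rightarrow> real"
  assumes f: "continuous_on UNIV f" and e: "e > 0"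
  obtains m where "\<And>y. (\<forall>i\<le>m. y i = z i) \<Longrightarrow> \<bar>f y - f z\<bar> < e"
proof -
  let ?S = "f -` ball (f z) e"
  have "openin (product_topology (\<lambda>i. euclidean) UNIV) ?S"
    using f by (simp add: open_vimage flip: open_fun_def)
  moreover have "z \<in> ?S" using e by simp
  ultimately obtain U where U: "finite {i. U i \<noteq> UNIV}" "z \<in> Pi\<^sub>E UNIV U" "Pi\<^sub>E UNIV U \<subseteq> ?S"
    unfolding openin_product_topology_alt by force
  define m where "m = Max (insert 0 {i. U i \<noteq> UNIV})"
  have "\<bar>f y - f z\<bar> < e" if y: "\<forall>i\<le>m. y i = z i" for y
  proof -
    have "y i \<in> U i" for i
    proof (cases "U i = UNIV")
      case False
      then have "i \<le> m" unfolding m_def using U(1) by (intro Max_ge) auto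
      then show ?thesis using y U(2) by (auto simp: PiE_iff)
    qed simp
    then have "y \<in> ?S" using U(3) by blast
    then show ?thesis by (simp add: dist_real_def abs_minus_commute)
  qed
  then show ?thesis using that by blast
qed

lemma tendsto_from_approximations:
  fixes u :: "'a \<Rightarrow> real"
  assumes "\<And>e. e > 0 \<Longrightarrow> \<exists>r. (r \<longlongrightarrow> 0) F \<and> eventually (\<lambda>k. \<bar>u k - L\<bar> \<le> e + r k) F"
  shows "(u \<longlongrightarrow> L) F"
proof (rule tendstoI)
  fix e :: real assume "e > 0"
  then obtain r where r: "(r \<longlongrightarrow> 0) F" "eventually (\<lambda>k. \<bar>u k - L\<bar> \<le> e/2 + r k) F"
    using assms[of "e/2"] by auto
  have "eventually (\<lambda>k. dist (r k) 0 < e/2) F"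
    using tendstoD[OF r(1), of "e/2"] \<open>e > 0\<close> by simp
  with r(2) show "eventually (\<lambda>k. dist (u k) L < e) F"
    by eventually_elim (auto simp: dist_real_def)
qed

lemma abs_weighted_deviation_le:
  fixes a w :: "nat \<Rightarrow> real"
  assumes A: "finite A" and w: "\<And>j. j \<in> A \<Longrightarrow> 0 \<le> w j" and D: "\<And>j. j \<in> A \<Longrightarrow> \<bar>a j - c\<bar> \<le> D"
    and e: "0 \<le> e" and good: "\<And>j. j \<in> A \<Longrightarrow> j \<notin> Bad \<Longrightarrow> \<bar>a j - c\<bar> \<le> e"
  shows "\<bar>\<Sum>j\<in>A. w j * (a j - c)\<bar> \<le> e * (\<Sum>j\<in>A. w j) + D * (\<Sum>j\<in>A \<inter> Bad. w j)"
proof -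
  have "\<bar>\<Sum>j\<in>A. w j * (a j - c)\<bar> \<le> (\<Sum>j\<in>A. \<bar>w j * (a j - c)\<bar>)" by (rule sum_abs)
  also have "\<dots> \<le> (\<Sum>j\<in>A. e * w j + D * (if j \<in> Bad then w j else 0))"
  proof (rule sum_mono)
    fix j assume j: "j \<in> A"
    have "\<bar>w j * (a j - c)\<bar> = w j * \<bar>a j - c\<bar>" using w[OF j] by (simp add: abs_mult)
    also have "\<dots> \<le> w j * (e + (if j \<in> Bad then D else 0))"
      using good[OF j] D[OF j] e by (intro mult_left_mono w[OF j]) auto
    finally show "\<bar>w j * (a j - c)\<bar> \<le> e * w j + D * (if j \<in> Bad then w j else 0)"
      by (auto simp: algebra_simps)
  qed
  also have "\<dots> = e * (\<Sum>j\<in>A. w j) + D * (\<Sum>j\<in>A \<inter> Bad. w j)"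
    using A by (simp add: sum.distrib sum_distrib_left sum.inter_restrict)
  finally show ?thesis .
qed

lemma tendsto_weighted_average_cylinder:
  fixes f :: "cantor \<Rightarrow> real" and y :: "nat \<Rightarrow> cantor" and w :: "'a \<Rightarrow> nat \<Rightarrow> real"
  assumes f: "continuous_on UNIV f" "bounded (range f)"
    and A: "\<And>k. finite (A k)" and w: "\<And>k j. j \<in> A k \<Longrightarrow> 0 \<le> w k j"
    and total: "((\<lambda>k. \<Sum>j\<in>A k. w k j) \<longlongrightarrow> 1) F"
    and escape: "\<And>m. ((\<lambda>k. \<Sum>j\<in>A k \<inter> {j. \<exists>i\<le>m. y j i \<noteq> z i}. w k j) \<longlongrightarrow> 0) F"
  shows "((\<lambda>k. \<Sum>j\<in>A k. w k j * f (y j)) \<longlongrightarrow> f z) F"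
proof (rule tendsto_from_approximations)
  obtain B where B: "\<And>y. \<bar>f y\<bar> \<le> B" using f(2) unfolding bounded_iff by auto
  fix e :: real assume "e > 0"
  then obtain m where m: "\<And>y. (\<forall>i\<le>m. y i = z i) \<Longrightarrow> \<bar>f y - f z\<bar> < e"
    using continuous_on_cylinder_close[OF f(1)] by blast
  define S where "S k = (\<Sum>j\<in>A k. w k j)" for k
  define Bad where "Bad = {j. \<exists>i\<le>m. y j i \<noteq> z i}"
  define r where "r k = (e + \<bar>f z\<bar>) * \<bar>S k - 1\<bar> + 2 * B * (\<Sum>j\<in>A k \<inter> Bad. w k j)" for k
  have "(r \<longlongrightarrow> (e + \<bar>f z\<bar>) * 0 + 2 * B * 0) F"
    unfolding r_def S_def Bad_def
    by (intro tendsto_intros escape tendsto_rabs_zero LIM_zero total)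
  moreover have "\<bar>(\<Sum>j\<in>A k. w k j * f (y j)) - f z\<bar> \<le> e + r k" for k
  proof -
    have dev: "\<bar>\<Sum>j\<in>A k. w k j * (f (y j) - f z)\<bar> \<le> e * S k + 2 * B * (\<Sum>j\<in>A k \<inter> Bad. w k j)"
      unfolding S_def
    proof (rule abs_weighted_deviation_le)
      show "\<bar>f (y j) - f z\<bar> \<le> 2 * B" for j using B[of "y j"] B[of z] by linarith
      show "\<bar>f (y j) - f z\<bar> \<le> e" if "j \<notin> Bad" for j
        using that m[of "y j"] unfolding Bad_def by fastforce
    qed (use A w \<open>e > 0\<close> in auto)
    have "(\<Sum>j\<in>A k. w k j * f (y j)) - f z = (\<Sum>j\<in>A k. w k j * (f (y j) - f z)) + f z * (S k - 1)"
      unfolding S_def by (simp add: algebra_simps sum_subtractf sum_distrib_left)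
    then have "\<bar>(\<Sum>j\<in>A k. w k j * f (y j)) - f z\<bar>
        \<le> \<bar>\<Sum>j\<in>A k. w k j * (f (y j) - f z)\<bar> + \<bar>f z\<bar> * \<bar>S k - 1\<bar>"
      by (metis abs_mult abs_triangle_ineq)
    moreover have "e * S k \<le> e * (1 + \<bar>S k - 1\<bar>)"
      using \<open>e > 0\<close> by (intro mult_left_mono) auto
    ultimately show ?thesis using dev unfolding r_def distrib_left distrib_right by linarith
  qed
  ultimately show "\<exists>r. (r \<longlongrightarrow> 0) F \<and> eventually (\<lambda>k. \<bar>(\<Sum>j\<in>A k. w k j * f (y j)) - f z\<bar> \<le> e + r k) F"
    by (intro exI[of _ r]) auto
qed

definition block_start :: "nat \<Rightarrow> nat" where
  "block_start k = 2 ^ (k * k)"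

definition block_seq :: cantor where
  "block_seq j \<longleftrightarrow> (\<exists>k. block_start k \<le> j \<and> j < 2 * block_start k)"

lemma block_start_pos: "0 < block_start k"
  by (simp add: block_start_def)

lemma block_start_mono: "k \<le> l \<Longrightarrow> block_start k \<le> block_start l"
  unfolding block_start_def by (intro power_increasing) (auto intro: mult_le_mono)

lemma two_block_start_le: "2 * block_start k \<le> block_start (Suc k)"
proof -
  have "(2::nat) ^ (1 + k * k) \<le> 2 ^ (Suc k * Suc k)" by (intro power_increasing) auto
  then show ?thesis by (simp add: block_start_def)
qed

lemma block_start_less_Suc: "block_start k < block_start (Suc k)"
  using two_block_start_le[of k] block_start_pos[of k] by linarith

lemma real_block_start: "real (block_start k) = 2 ^ (k * k)"
  by (simp add: block_start_def)

lemma block_seq_window_before_block: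
  assumes "block_seq (i + j)" "i \<le> m" "j < block_start (Suc k)"
  shows "j < 2 * block_start k \<or> block_start (Suc k) \<le> j + m"
proof -
  obtain l where l: "block_start l \<le> i + j" "i + j < 2 * block_start l"
    using assms(1) unfolding block_seq_def by blast
  show ?thesis
  proof (cases "l \<le> k")
    case True
    then show ?thesis using l block_start_mono[of l k] by linarith
  next
    case False
    then show ?thesis using l assms(2) block_start_mono[of "Suc k" l] by linarith
  qed
qed

lemma block_seq_window_inside_block:
  assumes "block_start k \<le> j" "j + m < 2 * block_start k" "i \<le> m"
  shows "block_seq (i + j)"
  unfolding block_seq_def using assms by (intro exI[of _ k]) auto

lemma card_block_seq_hits_before_block:
  "card ({..<block_start (Suc k)} \<inter> {j. \<exists>i\<le>m. block_seq (i + j)}) \<le> 2 * block_start k + m"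
proof -
  let ?M = "block_start (Suc k)"
  have "{..<?M} \<inter> {j. \<exists>i\<le>m. block_seq (i + j)} \<subseteq> {..<2 * block_start k} \<union> {?M - m..<?M}"
    using block_seq_window_before_block[of _ _ m k] by fastforce
  then have "card ({..<?M} \<inter> {j. \<exists>i\<le>m. block_seq (i + j)}) \<le> card ({..<2 * block_start k} \<union> {?M - m..<?M})"
    by (intro card_mono) auto
  also have "\<dots> \<le> card {..<2 * block_start k} + card {?M - m..<?M}" by (rule card_Un_le)
  finally show ?thesis by simp
qed

lemma card_block_seq_misses_inside_block:
  "card ({block_start k..<2 * block_start k} \<inter> {j. \<exists>i\<le>m. \<not> block_seq (i + j)}) \<le> m"
proof -
  let ?M = "block_start k"
  have "{?M..<2 * ?M} \<inter> {j. \<exists>i\<le>m. \<not> block_seq (i + j)} \<subseteq> {2 * ?M - m..<2 * ?M}"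
    using block_seq_window_inside_block[of k _ m] by force
  then have "card ({?M..<2 * ?M} \<inter> {j. \<exists>i\<le>m. \<not> block_seq (i + j)}) \<le> card {2 * ?M - m..<2 * ?M}"
    by (intro card_mono) auto
  then show ?thesis by simp
qed

lemma tendsto_average_before_block:
  fixes f :: "cantor \<Rightarrow> real"
  assumes f: "continuous_on UNIV f" "bounded (range f)"
  shows "(\<lambda>k. \<Sum>j<block_start (Suc k). 1 / real (block_start (Suc k)) * f ((shift ^^ j) block_seq))
           \<longlonglongrightarrow> f (\<lambda>_. False)"
proof (rule tendsto_weighted_average_cylinder[OF f])
  show "(\<lambda>k. \<Sum>j<block_start (Suc k). 1 / real (block_start (Suc k))) \<longlonglongrightarrow> 1"
    using block_start_pos by (simp add: less_imp_neq[symmetric])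
next
  fix m
  let ?Hits = "\<lambda>k. {..<block_start (Suc k)} \<inter> {j. \<exists>i\<le>m. (shift ^^ j) block_seq i \<noteq> False}"
  let ?bound = "\<lambda>k. (2 * 2 ^ (k * k) + real m) / 2 ^ (Suc k * Suc k) :: real"
  have bound: "(\<Sum>j\<in>?Hits k. 1 / real (block_start (Suc k))) \<le> ?bound k" for k
  proof -
    have "card (?Hits k) \<le> 2 * block_start k + m"
      using card_block_seq_hits_before_block[of k m] by (simp add: funpow_shift)
    then have "real (card (?Hits k)) \<le> real (2 * block_start k + m)"
      by (rule of_nat_mono)
    also have "\<dots> = 2 * 2 ^ (k * k) + real m"
      by (simp add: real_block_start)
    finally have "real (card (?Hits k)) / 2 ^ (Suc k * Suc k) \<le> ?bound k"
      by (rule divide_right_mono) simp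
    then show ?thesis by (simp add: real_block_start)
  qed
  have "?bound \<longlonglongrightarrow> 0"
    by real_asymp
  then show "(\<lambda>k. \<Sum>j\<in>?Hits k. 1 / real (block_start (Suc k))) \<longlonglongrightarrow> 0"
    by (rule Lim_null_comparison[rotated])
       (use bound in \<open>auto intro!: always_eventually simp: abs_of_nonneg sum_nonneg\<close>)
qed auto

lemma tendsto_average_inside_block:
  fixes f :: "cantor \<Rightarrow> real"
  assumes f: "continuous_on UNIV f" "bounded (range f)"
  shows "(\<lambda>k. \<Sum>j\<in>{block_start (Suc k)..<2 * block_start (Suc k)}.
            1 / real (block_start (Suc k)) * f ((shift ^^ j) block_seq)) \<longlonglongrightarrow> f (\<lambda>_. True)"
proof (rule tendsto_weighted_average_cylinder[OF f])
  show "(\<lambda>k. \<Sum>j\<in>{block_start (Suc k)..<2 * block_start (Suc k)}. 1 / real (block_start (Suc k)))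
      \<longlonglongrightarrow> 1"
    using block_start_pos by (simp add: less_imp_neq[symmetric])
next
  fix m
  let ?M = "\<lambda>k. block_start (Suc k)"
  let ?Misses = "\<lambda>k. {?M k..<2 * ?M k} \<inter> {j. \<exists>i\<le>m. (shift ^^ j) block_seq i \<noteq> True}"
  let ?bound = "\<lambda>k. real m / 2 ^ (Suc k * Suc k) :: real"
  have bound: "(\<Sum>j\<in>?Misses k. 1 / real (?M k)) \<le> ?bound k" for k
  proof -
    have "card (?Misses k) \<le> m"
      using card_block_seq_misses_inside_block[of "Suc k" m] by (simp add: funpow_shift)
    then have "real (card (?Misses k)) / 2 ^ (Suc k * Suc k) \<le> ?bound k"
      by (intro divide_right_mono) simp_all
    then show ?thesis by (simp add: real_block_start)
  qed
  have "?bound \<longlonglongrightarrow> 0"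
    by real_asymp
  then show "(\<lambda>k. \<Sum>j\<in>?Misses k. 1 / real (?M k)) \<longlonglongrightarrow> 0"
    by (rule Lim_null_comparison[rotated])
       (use bound in \<open>auto intro!: always_eventually simp: abs_of_nonneg sum_nonneg\<close>)
qed auto

lemma harm_over_ln_tendsto: "(\<lambda>N. harm N / ln (real N)) \<longlonglongrightarrow> 1"
proof -
  obtain \<gamma> where \<gamma>: "(\<lambda>n. harm n - ln (real n)) \<longlonglongrightarrow> \<gamma>"
    using euler_mascheroni_convergent convergent_def by blast
  have "filterlim (\<lambda>n. ln (real n)) at_infinity sequentially"
    by (rule filterlim_at_top_imp_at_infinity) real_asymp
  then have "(\<lambda>n. 1 + (harm n - ln (real n)) / ln (real n)) \<longlonglongrightarrow> 1 + 0"
    by (intro tendsto_add tendsto_const tendsto_divide_0[OF \<gamma>])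
  moreover have "eventually (\<lambda>n. 1 + (harm n - ln (real n)) / ln (real n) = harm n / ln (real n)) sequentially"
    using eventually_ge_at_top[of 2] by eventually_elim (auto simp: field_simps)
  ultimately show ?thesis using tendsto_cong by force
qed

lemma sum_inverse_Suc_window_le: "(\<Sum>j\<in>{a - m..<2 * a}. 1 / real (Suc j)) \<le> real (2 * m + 1)"
proof -
  have "card {a - m..<2 * a} \<le> (2 * m + 1) * Suc (a - m)"
    by (cases "m \<le> a") auto
  then have "real (card {a - m..<2 * a}) \<le> real (2 * m + 1) * real (Suc (a - m))"
    by (metis of_nat_le_iff of_nat_mult)
  then have card: "real (card {a - m..<2 * a}) * (1 / real (Suc (a - m))) \<le> real (2 * m + 1)"
    by (simp add: divide_simps)
  have "(\<Sum>j\<in>{a - m..<2 * a}. 1 / real (Suc j)) \<le> real (card {a - m..<2 * a}) * (1 / real (Suc (a - m)))"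
    by (rule sum_bounded_above) (auto simp: frac_le)
  with card show ?thesis by linarith
qed

lemma sum_le_sum_over_cover:
  fixes w :: "'a \<Rightarrow> real"
  assumes "finite A" "finite L" and cover: "\<And>j. j \<in> A \<Longrightarrow> \<exists>l\<in>L. j \<in> W l"
    and w: "\<And>j. 0 \<le> w j"
  shows "(\<Sum>j\<in>A. w j) \<le> (\<Sum>l\<in>L. \<Sum>j\<in>A \<inter> W l. w j)"
proof -
  have "(\<Sum>j\<in>A. w j) \<le> (\<Sum>j\<in>A. \<Sum>l\<in>L. if j \<in> W l then w j else 0)"
  proof (rule sum_mono)
    fix j assume "j \<in> A"
    then obtain l where "l \<in> L" "j \<in> W l" using cover by blast
    then show "w j \<le> (\<Sum>l\<in>L. if j \<in> W l then w j else 0)"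
      using member_le_sum[of l L "\<lambda>l. if j \<in> W l then w j else 0"] assms(2) w by simp
  qed
  also have "\<dots> = (\<Sum>l\<in>L. \<Sum>j\<in>A \<inter> W l. w j)"
    using assms(1) by (subst sum.swap) (simp add: sum.inter_restrict)
  finally show ?thesis .
qed

lemma block_seq_hit_window:
  assumes "block_seq (i + j)" "i \<le> m" "j < N"
  obtains l where "j \<in> {block_start l - m..<2 * block_start l}"
    and "real l < sqrt (log 2 (real N + real m))"
proof -
  obtain l where l: "block_start l \<le> i + j" "i + j < 2 * block_start l"
    using assms(1) unfolding block_seq_def by blast
  have "2 ^ (l * l) < N + m" using l assms(2,3) unfolding block_start_def by linarith
  then have "real (l * l) < log 2 (real (N + m))" by (rule less_log2_of_power)
  then have "real l ^ 2 < log 2 (real N + real m)" by (simp add: power2_eq_square)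
  then have "real l < sqrt (log 2 (real N + real m))" by (rule real_less_rsqrt)
  moreover have "j \<in> {block_start l - m..<2 * block_start l}" using l assms(2) by auto
  ultimately show ?thesis using that by blast
qed

lemma harmonic_sum_block_seq_hits_le:
  assumes "1 \<le> N"
  shows "(\<Sum>j\<in>{..<N} \<inter> {j. \<exists>i\<le>m. block_seq (i + j)}. 1 / real (Suc j))
           \<le> real (2 * m + 1) * (sqrt (log 2 (real N + real m)) + 1)"
proof -
  define t where "t = sqrt (log 2 (real N + real m))"
  define W where "W l = {block_start l - m..<2 * block_start l}" for l
  let ?Hits = "{..<N} \<inter> {j. \<exists>i\<le>m. block_seq (i + j)}"
  have "(\<Sum>j\<in>?Hits. 1 / real (Suc j)) \<le> (\<Sum>l<nat \<lceil>t\<rceil>. \<Sum>j\<in>?Hits \<inter> W l. 1 / real (Suc j))"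
  proof (rule sum_le_sum_over_cover)
    fix j assume "j \<in> ?Hits"
    then obtain i where hit: "block_seq (i + j)" "i \<le> m" "j < N" by auto
    obtain l where "j \<in> W l" "real l < t"
      using block_seq_hit_window[OF hit] unfolding W_def t_def by blast
    moreover from \<open>real l < t\<close> have "l < nat \<lceil>t\<rceil>" by linarith
    ultimately show "\<exists>l\<in>{..<nat \<lceil>t\<rceil>}. j \<in> W l" by blast
  qed simp_all
  also have "\<dots> \<le> (\<Sum>l<nat \<lceil>t\<rceil>. real (2 * m + 1))"
  proof (rule sum_mono)
    fix l
    have "(\<Sum>j\<in>?Hits \<inter> W l. 1 / real (Suc j)) \<le> (\<Sum>j\<in>W l. 1 / real (Suc j))"
      by (rule sum_mono2) (auto simp: W_def)
    also have "\<dots> \<le> real (2 * m + 1)" unfolding W_def by (rule sum_inverse_Suc_window_le)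
    finally show "(\<Sum>j\<in>?Hits \<inter> W l. 1 / real (Suc j)) \<le> real (2 * m + 1)" .
  qed
  also have "\<dots> \<le> real (2 * m + 1) * (t + 1)"
  proof -
    have "0 \<le> t" unfolding t_def using assms by simp
    then have "real (nat \<lceil>t\<rceil>) \<le> t + 1" by linarith
    then show ?thesis by (simp add: mult.commute)
  qed
  finally show ?thesis unfolding t_def .
qed

lemma tendsto_log_average_block_seq:
  fixes f :: "cantor \<Rightarrow> real"
  assumes f: "continuous_on UNIV f" "bounded (range f)"
  shows "(\<lambda>N. \<Sum>j<N. 1 / (ln (real N) * real (Suc j)) * f ((shift ^^ j) block_seq)) \<longlonglongrightarrow> f (\<lambda>_. False)"
proof (rule tendsto_weighted_average_cylinder[OF f])
  have "(\<Sum>j<N. 1 / (ln (real N) * real (Suc j))) = harm N / ln (real N)" for N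
    unfolding harm_altdef sum_divide_distrib
    by (rule sum.cong) (simp_all only: divide_divide_eq_left inverse_eq_divide mult.commute)
  then show "(\<lambda>N. \<Sum>j<N. 1 / (ln (real N) * real (Suc j))) \<longlonglongrightarrow> 1"
    using harm_over_ln_tendsto by simp
next
  fix m
  let ?Hits = "\<lambda>N. {..<N} \<inter> {j. \<exists>i\<le>m. (shift ^^ j) block_seq i \<noteq> False}"
  let ?bound = "\<lambda>N. real (2 * m + 1) * (sqrt (log 2 (real N + real m)) + 1) / ln (real N)"
  have bound: "norm (\<Sum>j\<in>?Hits N. 1 / (ln (real N) * real (Suc j))) \<le> ?bound N" if "2 \<le> N" for N
  proof -
    have ln: "0 < ln (real N)" using that by simp
    have "(\<Sum>j\<in>?Hits N. 1 / (ln (real N) * real (Suc j)))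
        = (\<Sum>j\<in>{..<N} \<inter> {j. \<exists>i\<le>m. block_seq (i + j)}. 1 / real (Suc j)) / ln (real N)"
      by (simp add: funpow_shift sum_divide_distrib mult.commute[of "ln (real N)"])
    also have "\<dots> \<le> ?bound N"
      using harmonic_sum_block_seq_hits_le[of N m] that ln by (intro divide_right_mono) auto
    finally show ?thesis using ln by (simp add: abs_of_nonneg sum_nonneg)
  qed
  have "\<forall>\<^sub>F N in sequentially. norm (\<Sum>j\<in>?Hits N. 1 / (ln (real N) * real (Suc j))) \<le> ?bound N"
    using eventually_ge_at_top[of 2] by eventually_elim (rule bound)
  moreover have "?bound \<longlonglongrightarrow> 0" by real_asymp
  ultimately show "(\<lambda>N. \<Sum>j\<in>?Hits N. 1 / (ln (real N) * real (Suc j))) \<longlonglongrightarrow> 0"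
    by (rule Lim_null_comparison)
next
  show "0 \<le> 1 / (ln (real N) * real (Suc j))" if "j \<in> {..<N}" for N j
    using that by simp
qed auto

lemma tendsto_integral_Emp_twice_block_start:
  fixes f :: "cantor \<Rightarrow> real"
  assumes f: "continuous_on UNIV f" "bounded (range f)"
  shows "(\<lambda>k. integral\<^sup>L (Emp block_seq (2 * block_start (Suc k))) f)
           \<longlonglongrightarrow> (f (\<lambda>_. False) + f (\<lambda>_. True)) / 2"
proof -
  define F where "F M j = 1 / real M * f ((shift ^^ j) block_seq)" for M j
  have "integral\<^sup>L (Emp block_seq (2 * M)) f = (\<Sum>j<2 * M. F M j / 2)" for M
    unfolding integral_Emp[OF f(1)] F_def by (intro sum.cong) simp_all
  also have "(\<Sum>j<2 * M. F M j / 2) = ((\<Sum>j<M. F M j) + (\<Sum>j\<in>{M..<2 * M}. F M j)) / 2" for M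
    unfolding sum_divide_distrib[symmetric] lessThan_atLeast0
    by (simp add: sum.atLeastLessThan_concat)
  finally have eq: "integral\<^sup>L (Emp block_seq (2 * M)) f
      = ((\<Sum>j<M. F M j) + (\<Sum>j\<in>{M..<2 * M}. F M j)) / 2" for M .
  have "(\<lambda>k. (\<Sum>j<block_start (Suc k). F (block_start (Suc k)) j)) \<longlonglongrightarrow> f (\<lambda>_. False)"
    unfolding F_def by (rule tendsto_average_before_block[OF f])
  moreover have "(\<lambda>k. (\<Sum>j\<in>{block_start (Suc k)..<2 * block_start (Suc k)}. F (block_start (Suc k)) j))
      \<longlonglongrightarrow> f (\<lambda>_. True)"
    unfolding F_def by (rule tendsto_average_inside_block[OF f])
  ultimately show ?thesis
    unfolding eq by (intro tendsto_divide tendsto_add tendsto_const) simp_all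
qed

lemma integral_eq_if_Emp_log_tendsto:
  fixes f :: "cantor \<Rightarrow> real"
  assumes "\<nu> \<in> V_log x" "continuous_on UNIV f" "bounded (range f)"
    and lim: "(\<lambda>N. integral\<^sup>L (Emp_log x N) f) \<longlonglongrightarrow> c"
  shows "integral\<^sup>L \<nu> f = c"
proof -
  obtain Nk where Nk: "strict_mono Nk" "weak_star_conv (\<lambda>k. Emp_log x (Nk k)) \<nu>"
    using assms(1) by (auto simp: V_log_def)
  have "(\<lambda>k. integral\<^sup>L (Emp_log x (Nk k)) f) \<longlonglongrightarrow> integral\<^sup>L \<nu> f"
    using Nk(2) assms(2,3) by (simp add: weak_star_conv_def)
  moreover have "(\<lambda>k. integral\<^sup>L (Emp_log x (Nk k)) f) \<longlonglongrightarrow> c"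
    using LIMSEQ_subseq_LIMSEQ[OF lim Nk(1)] by (simp add: o_def)
  ultimately show ?thesis by (rule LIMSEQ_unique)
qed

lemma V_log_block_seq_integral:
  fixes f :: "cantor \<Rightarrow> real"
  assumes "\<nu> \<in> V_log block_seq" "continuous_on UNIV f" "bounded (range f)"
  shows "integral\<^sup>L \<nu> f = f (\<lambda>_. False)"
  using assms tendsto_log_average_block_seq[OF assms(2,3)]
  unfolding integral_Emp_log[OF assms(2), symmetric] by (rule integral_eq_if_Emp_log_tendsto)

lemma exists_average_of_two_points:
  "\<exists>\<nu>. borel_prob \<nu> \<and> (\<forall>f :: cantor \<Rightarrow> real. continuous_on UNIV f \<longrightarrow> integral\<^sup>L \<nu> f = (f a + f b) / 2)"
proof -
  define g :: "nat \<Rightarrow> cantor" where "g n = (if n = 0 then a else b)" for n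
  let ?U = "uniform_count_measure {0::nat, 1}"
  have g: "g \<in> measurable ?U borel"
    unfolding uniform_count_measure_def by simp
  have "prob_space ?U" by (rule prob_space_uniform_count_measure) auto
  then have "borel_prob (distr ?U borel g)"
    unfolding borel_prob_def using prob_space.prob_space_distr[OF _ g] by simp
  moreover have "integral\<^sup>L (distr ?U borel g) f = (f a + f b) / 2" if "continuous_on UNIV f" for f :: "cantor \<Rightarrow> real"
  proof -
    have "integral\<^sup>L (distr ?U borel g) f = integral\<^sup>L ?U (\<lambda>n. f (g n))"
      by (rule integral_distr[OF g borel_measurable_continuous_onI[OF that]])
    also have "\<dots> = (f a + f b) / 2"
      by (subst integral_uniform_count_measure) (simp_all add: g_def)
    finally show ?thesis .
  qed
  ultimately show ?thesis by blast
qed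

lemma continuous_on_cantor_coordinate:
  fixes g :: "bool \<Rightarrow> 'b::topological_space"
  shows "continuous_on UNIV (\<lambda>y :: cantor. g (y i))"
proof -
  have "continuous_on UNIV (g \<circ> (\<lambda>y :: cantor. y i))"
    by (rule continuous_on_compose[OF continuous_on_product_coordinates Topological_Spaces.continuous_on_discrete])
  then show ?thesis by (simp add: o_def)
qed

lemma V_log_block_seq_subset_V: "V_log block_seq \<subseteq> V block_seq"
proof
  fix \<nu> assume \<nu>: "\<nu> \<in> V_log block_seq"
  have "weak_star_conv (\<lambda>k. Emp block_seq (block_start (Suc k))) \<nu>"
    unfolding weak_star_conv_def
  proof (intro allI impI, elim conjE)
    fix f :: "cantor \<Rightarrow> real" assume f: "continuous_on UNIV f" "bounded (range f)"
    show "(\<lambda>k. integral\<^sup>L (Emp block_seq (block_start (Suc k))) f) \<longlonglongrightarrow> integral\<^sup>L \<nu> f"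
      unfolding integral_Emp[OF f(1)] V_log_block_seq_integral[OF \<nu> f]
      by (rule tendsto_average_before_block[OF f])
  qed
  moreover have "strict_mono (\<lambda>k. block_start (Suc k))"
    by (rule strict_monoI_Suc) (rule block_start_less_Suc)
  ultimately show "\<nu> \<in> V block_seq" using \<nu> unfolding V_def V_log_def by blast
qed

lemma average_of_two_points_in_V_block_seq:
  assumes "borel_prob \<nu>"
    and \<nu>: "\<And>f :: cantor \<Rightarrow> real. continuous_on UNIV f \<Longrightarrow>
      integral\<^sup>L \<nu> f = (f (\<lambda>_. False) + f (\<lambda>_. True)) / 2"
  shows "\<nu> \<in> V block_seq"
proof -
  have "weak_star_conv (\<lambda>k. Emp block_seq (2 * block_start (Suc k))) \<nu>"
    unfolding weak_star_conv_def
  proof (intro allI impI, elim conjE)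
    fix f :: "cantor \<Rightarrow> real" assume f: "continuous_on UNIV f" "bounded (range f)"
    show "(\<lambda>k. integral\<^sup>L (Emp block_seq (2 * block_start (Suc k))) f) \<longlonglongrightarrow> integral\<^sup>L \<nu> f"
      unfolding \<nu>[OF f(1)] by (rule tendsto_integral_Emp_twice_block_start[OF f])
  qed
  moreover have "strict_mono (\<lambda>k. 2 * block_start (Suc k))"
    by (rule strict_monoI_Suc) (simp add: block_start_less_Suc)
  ultimately show ?thesis using assms(1) unfolding V_def by blast
qed

theorem proposition4p3:
  shows "\<exists>x :: cantor. V_log x \<subset> V x"
proof (intro exI[of _ block_seq] psubsetI V_log_block_seq_subset_V)
  obtain \<nu> where \<nu>: "borel_prob \<nu>"
    "\<And>f :: cantor \<Rightarrow> real. continuous_on UNIV f \<Longrightarrow> integral\<^sup>L \<nu> f = (f (\<lambda>_. False) + f (\<lambda>_. True)) / 2"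
    using exists_average_of_two_points by blast
  then have "\<nu> \<in> V block_seq" by (rule average_of_two_points_in_V_block_seq)
  moreover have "\<nu> \<notin> V_log block_seq"
  proof
    let ?f = "\<lambda>y :: cantor. if y 0 then 1 else 0 :: real"
    have f: "continuous_on UNIV ?f" "bounded (range ?f)"
      by (rule continuous_on_cantor_coordinate) (rule finite_imp_bounded, simp add: image_def)
    assume "\<nu> \<in> V_log block_seq"
    then have "integral\<^sup>L \<nu> ?f = 0" using V_log_block_seq_integral[OF _ f] by simp
    with \<nu>(2)[OF f(1)] show False by simp
  qed
  ultimately show "V_log block_seq \<noteq> V block_seq" by blast
qed

end
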